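(* Let $D$ and $D'$ be minimized DFAs over the same alphabet with $S(D)=S(D')$. Then $D\cong_I D'$.
   Context: All DFAs are complete and all states are reachable; a DFA is \emph{minimized} if it is the minimal DFA for its language (no two distinct states $p\ne q$ have $L(p)=L(q)$). For languages, $L\sim L'$ means $L\triangle L'$ is finite; $[L]$ is the $\sim$-class of $L$. For a state $q$ of $D=(Q,\Sigma,\delta,q_0,A)$, $L(q)$ is the language recognized by $(Q,\Sigma,\delta,q,A)$, and $S(D)=\{[L(q)]:q\in Q\}$. The \emph{infinite part} $I(D)$ is the set of states $q$ with $\{w:\delta(q_0,w)=q\}$ infinite. $D\cong_I D'$ means there is a bijection $f:I(D)\to I(D')$ with $q\in A\iff f(q)\in A'$ and $f(\delta(q,c))=\delta'(f(q),c)$ for all $q\in I(D)$, $c\in\Sigma$. *)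

theory Defs
  imports Main
begin

record ('q, 'a) dfa =
  states :: "'q set"
  alphabet :: "'a set"
  delta :: "'q \<Rightarrow> 'a \<Rightarrow> 'q"
  init :: 'q
  accept :: "'q set"

definition delta_star :: "('q, 'a) dfa \<Rightarrow> 'q \<Rightarrow> 'a list \<Rightarrow> 'q" where
  "delta_star D q w = foldl (delta D) q w"

definition wf_dfa :: "('q, 'a) dfa \<Rightarrow> bool" where
  "wf_dfa D \<longleftrightarrow> finite (states D) \<and> finite (alphabet D) \<and>
     init D \<in> states D \<and> accept D \<subseteq> states D \<and>
     (\<forall>q\<in>states D. \<forall>c\<in>alphabet D. delta D q c \<in> states D) \<and>
     (\<forall>q\<in>states D. \<exists>w\<in>lists (alphabet D). delta_star D (init D) w = q)"

definition lang_from :: "('q, 'a) dfa \<Rightarrow> 'q \<Rightarrow> 'a list set" where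
  "lang_from D q = {w \<in> lists (alphabet D). delta_star D q w \<in> accept D}"

definition minimized :: "('q, 'a) dfa \<Rightarrow> bool" where
  "minimized D \<longleftrightarrow> wf_dfa D \<and>
     (\<forall>p\<in>states D. \<forall>q\<in>states D. p \<noteq> q \<longrightarrow> lang_from D p \<noteq> lang_from D q)"

definition fin_equiv :: "'a list set \<Rightarrow> 'a list set \<Rightarrow> bool" where
  "fin_equiv L L' \<longleftrightarrow> finite ((L - L') \<union> (L' - L))"

definition fe_class :: "'a list set \<Rightarrow> 'a list set set" where
  "fe_class L = {L'. fin_equiv L L'}"

definition S_classes :: "('q, 'a) dfa \<Rightarrow> 'a list set set set" where
  "S_classes D = {fe_class (lang_from D q) | q. q \<in> states D}"

definition infinite_part :: "('q, 'a) dfa \<Rightarrow> 'q set" where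
  "infinite_part D = {q \<in> states D.
      infinite {w \<in> lists (alphabet D). delta_star D (init D) w = q}}"

definition iso_I :: "('q, 'a) dfa \<Rightarrow> ('p, 'a) dfa \<Rightarrow> bool" where
  "iso_I D D' \<longleftrightarrow> (\<exists>f. bij_betw f (infinite_part D) (infinite_part D') \<and>
     (\<forall>q\<in>infinite_part D. (q \<in> accept D \<longleftrightarrow> f q \<in> accept D') \<and>
        (\<forall>c\<in>alphabet D. f (delta D q c) = delta D' (f q) c)))"

end

theory Submission
  imports Defs
begin

text \<open>
  A state \<open>q\<close> of the infinite part is reached by a path through a state \<open>r\<close> on a cycle,
  \<open>\<delta>*(r, v) = r\<close> with \<open>v \<noteq> []\<close>, followed by \<open>\<delta>*(r, y) = q\<close>. Since \<open>[L(r)] \<in> S(D')\<close>,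
  some state \<open>r'\<close> of \<open>D'\<close> has \<open>L(r') \<sim> L(r)\<close>. Reading powers of \<open>v\<close> from \<open>r'\<close> must
  eventually cycle at a state \<open>s'\<close>, which therefore lies in the infinite part of \<open>D'\<close>, and
  \<open>L(s')\<close> is a quotient of \<open>L(r')\<close> by a power of \<open>v\<close>, hence still \<open>\<sim> L(r)\<close>. Now \<open>L(s')\<close>
  and \<open>L(r)\<close> are both invariant under the quotient by the same nonempty word, and two such
  languages with finite symmetric difference are equal. So \<open>L(q)\<close>, the quotient of \<open>L(r)\<close>
  by \<open>y\<close>, is the language of a state in the infinite part of \<open>D'\<close>. By symmetry both infinite
  parts realise the same languages, and minimality turns this into the isomorphism.
\<close>

definition left_quotient :: "'a list \<Rightarrow> 'a list set \<Rightarrow> 'a list set" where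
  "left_quotient u L = {w. u @ w \<in> L}"

lemma left_quotient_Nil [simp]: "left_quotient [] L = L"
  by (simp add: left_quotient_def)

lemma left_quotient_append: "left_quotient (u @ v) L = left_quotient v (left_quotient u L)"
  by (simp add: left_quotient_def)

lemma left_quotient_concat_replicate:
  assumes "left_quotient v L = L"
  shows "left_quotient (concat (replicate m v)) L = L"
  by (induction m) (simp_all add: left_quotient_append assms)

lemma fin_equiv_commute: "fin_equiv L M \<longleftrightarrow> fin_equiv M L"
  by (simp add: fin_equiv_def Un_commute)

lemma fin_equiv_left_quotient:
  assumes "fin_equiv L M"
  shows "fin_equiv (left_quotient u L) (left_quotient u M)"
proof -
  have "(left_quotient u L - left_quotient u M) \<union> (left_quotient u M - left_quotient u L)
      = (@) u -` ((L - M) \<union> (M - L))"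
    by (auto simp: left_quotient_def)
  moreover have "finite ((@) u -` ((L - M) \<union> (M - L)))"
    using assms unfolding fin_equiv_def by (rule finite_vimageI) (simp add: inj_on_def)
  ultimately show ?thesis
    unfolding fin_equiv_def by simp
qed

text \<open>A longest word of the finite symmetric difference would be lengthened by the prefix \<open>u\<close>.\<close>
lemma eq_if_fin_equiv_left_quotient_fixed:
  assumes "u \<noteq> []" "left_quotient u L = L" "left_quotient u M = M" "fin_equiv L M"
  shows "L = M"
proof (rule ccontr)
  define S where "S = (L - M) \<union> (M - L)"
  assume "L \<noteq> M"
  then have "S \<noteq> {}" "finite S"
    using assms(4) by (auto simp: S_def fin_equiv_def)
  then have "Max (length ` S) \<in> length ` S"
    by (intro Max_in) auto
  then obtain x where x: "x \<in> S" "length x = Max (length ` S)"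
    by auto
  have "u @ x \<in> S"
    using x(1) assms(2,3) by (auto simp: S_def left_quotient_def)
  then have "length (u @ x) \<le> length x"
    using Max_ge[OF finite_imageI[OF \<open>finite S\<close>] imageI] x(2) by metis
  then show False
    using assms(1) by simp
qed

lemma delta_star_Nil [simp]: "delta_star D q [] = q"
  by (simp add: delta_star_def)

lemma delta_star_append: "delta_star D q (u @ v) = delta_star D (delta_star D q u) v"
  by (simp add: delta_star_def)

lemma delta_star_singleton: "delta_star D q [c] = delta D q c"
  by (simp add: delta_star_def)

lemma delta_star_concat_replicate:
  assumes "delta_star D q v = q"
  shows "delta_star D q (concat (replicate m v)) = q"
  by (induction m) (simp_all add: delta_star_append assms)

lemma delta_star_in_states:
  assumes "wf_dfa D" "q \<in> states D" "w \<in> lists (alphabet D)"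
  shows "delta_star D q w \<in> states D"
  using assms(2,3)
proof (induction w arbitrary: q rule: rev_induct)
  case (snoc c w)
  then show ?case
    using assms(1) by (auto simp: wf_dfa_def delta_star_append delta_star_singleton)
qed simp

lemma lang_from_delta_star:
  assumes "u \<in> lists (alphabet D)"
  shows "lang_from D (delta_star D q u) = left_quotient u (lang_from D q)"
  using assms by (auto simp: lang_from_def left_quotient_def delta_star_append)

lemma lang_from_delta:
  assumes "c \<in> alphabet D"
  shows "lang_from D (delta D q c) = left_quotient [c] (lang_from D q)"
  using lang_from_delta_star[of "[c]" D q] assms by (simp add: delta_star_singleton)

lemma Nil_in_lang_from_iff: "[] \<in> lang_from D q \<longleftrightarrow> q \<in> accept D"
  by (simp add: lang_from_def)

lemma inj_on_lang_from: "minimized D \<Longrightarrow> inj_on (lang_from D) (states D)"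
  unfolding minimized_def inj_on_def by blast

lemma infinite_part_subset_states: "infinite_part D \<subseteq> states D"
  unfolding infinite_part_def by blast

lemma delta_star_in_infinite_part:
  assumes "wf_dfa D" "p \<in> infinite_part D" "y \<in> lists (alphabet D)"
  shows "delta_star D p y \<in> infinite_part D"
proof -
  let ?W = "{w \<in> lists (alphabet D). delta_star D (init D) w = p}"
  let ?V = "{w \<in> lists (alphabet D). delta_star D (init D) w = delta_star D p y}"
  have "infinite ?W"
    using assms(2) by (simp add: infinite_part_def)
  then have "infinite ((\<lambda>w. w @ y) ` ?W)"
    by (simp add: finite_image_iff inj_on_def)
  moreover have "(\<lambda>w. w @ y) ` ?W \<subseteq> ?V"
    using assms(3) by (auto simp: delta_star_append)
  ultimately have "infinite ?V"
    by (rule infinite_super[rotated])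
  moreover have "p \<in> states D"
    using assms(2) infinite_part_subset_states[of D] by blast
  then have "delta_star D p y \<in> states D"
    using delta_star_in_states[OF assms(1) _ assms(3)] by blast
  ultimately show ?thesis
    by (simp add: infinite_part_def)
qed

lemma in_infinite_part_if_cycle:
  assumes "wf_dfa D" "s \<in> states D" "u \<in> lists (alphabet D)" "u \<noteq> []"
    and "delta_star D s u = s"
  shows "s \<in> infinite_part D"
proof -
  obtain z where z: "z \<in> lists (alphabet D)" "delta_star D (init D) z = s"
    using assms(1,2) unfolding wf_dfa_def by blast
  let ?pump = "\<lambda>m. z @ concat (replicate m u)"
  have "inj ?pump"
  proof (rule injI)
    fix a b
    assume "?pump a = ?pump b"
    then have "length (concat (replicate a u)) = length (concat (replicate b u))"
      by simp
    then have "a * length u = b * length u"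
      by (simp add: length_concat sum_list_replicate)
    then show "a = b"
      using assms(4) by simp
  qed
  then have "infinite (range ?pump)"
    by (simp add: finite_image_iff)
  moreover have "range ?pump \<subseteq> {w \<in> lists (alphabet D). delta_star D (init D) w = s}"
    using z assms(3,5) by (auto simp: delta_star_append delta_star_concat_replicate)
  ultimately have "infinite {w \<in> lists (alphabet D). delta_star D (init D) w = s}"
    by (rule infinite_super[rotated])
  then show ?thesis
    using assms(2) by (simp add: infinite_part_def)
qed

lemma pigeonhole_nat_upto_card:
  assumes "finite B" "f ` {..card B} \<subseteq> B"
  obtains a b where "a < b" "b \<le> card B" "f a = f b"
proof -
  have "card (f ` {..card B}) < card {..card B}"
    using assms card_mono[OF assms(1)] by (simp add: le_imp_less_Suc)
  then obtain a b where ab: "a \<le> card B" "b \<le> card B" "a \<noteq> b" "f a = f b"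
    using pigeonhole unfolding inj_on_def by (meson atMost_iff)
  show ?thesis
  proof (cases "a < b")
    case True
    then show ?thesis using that ab by blast
  next
    case False
    then show ?thesis using that[of b a] ab by simp
  qed
qed

text \<open>Pumping: a word reaching \<open>q\<close> that is longer than the number of states revisits a state.\<close>
lemma infinite_part_reached_from_cycle:
  assumes "wf_dfa D" "q \<in> infinite_part D"
  obtains r v y where "r \<in> states D" "v \<in> lists (alphabet D)" "v \<noteq> []"
    "delta_star D r v = r" "y \<in> lists (alphabet D)" "delta_star D r y = q"
proof -
  let ?n = "card (states D)"
  let ?W = "{w \<in> lists (alphabet D). delta_star D (init D) w = q}"
  have wf: "finite (states D)" "finite (alphabet D)" "init D \<in> states D"
    using assms(1) by (simp_all add: wf_dfa_def)
  then have "finite {w. set w \<subseteq> alphabet D \<and> length w \<le> ?n}"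
    by (simp add: finite_lists_length_le)
  moreover have "infinite ?W"
    using assms(2) by (simp add: infinite_part_def)
  ultimately have "\<not> ?W \<subseteq> {w. set w \<subseteq> alphabet D \<and> length w \<le> ?n}"
    using finite_subset by blast
  then obtain w where "w \<in> ?W" "w \<notin> {w. set w \<subseteq> alphabet D \<and> length w \<le> ?n}"
    by blast
  then have w: "w \<in> lists (alphabet D)" "delta_star D (init D) w = q" "?n < length w"
    by auto
  define f where "f i = delta_star D (init D) (take i w)" for i
  have f_states: "f ` {..?n} \<subseteq> states D"
    using delta_star_in_states[OF assms(1) wf(3)] w(1) by (auto simp: f_def dest: in_set_takeD)
  then obtain a b where ab: "a < b" "b \<le> ?n" "f a = f b"
    using pigeonhole_nat_upto_card[OF wf(1)] by metis
  define v where "v = drop a (take b w)"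
  have take_b: "take b w = take a w @ v"
    using ab(1) append_take_drop_id[of a "take b w"] by (simp add: v_def min_def)
  show ?thesis
  proof
    show "f a \<in> states D"
      using f_states ab by auto
    show "v \<in> lists (alphabet D)" "drop b w \<in> lists (alphabet D)"
      using w(1) by (auto simp: v_def dest: in_set_dropD in_set_takeD)
    show "v \<noteq> []"
      using ab w(3) by (simp add: v_def)
    show "delta_star D (f a) v = f a"
      using ab(3) take_b by (simp add: f_def delta_star_append)
    show "delta_star D (f a) (drop b w) = q"
      using ab(3) w(2) unfolding f_def by (metis append_take_drop_id delta_star_append)
  qed
qed

lemma fin_equiv_lang_from_if_S_classes_subset:
  assumes "S_classes D \<subseteq> S_classes D'" "q \<in> states D"
  obtains q' where "q' \<in> states D'" "fin_equiv (lang_from D q) (lang_from D' q')"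
proof -
  obtain q' where q': "q' \<in> states D'" "fe_class (lang_from D q) = fe_class (lang_from D' q')"
    using assms unfolding S_classes_def by blast
  have "lang_from D' q' \<in> fe_class (lang_from D q)"
    unfolding q'(2) by (simp add: fe_class_def fin_equiv_def)
  then show ?thesis
    using that q'(1) by (simp add: fe_class_def)
qed

text \<open>Iterating \<open>v\<close> from \<open>r'\<close> eventually cycles; at the cycle the language is again fixed
  by a nonempty quotient and is still finitely equivalent to \<open>L\<close>, hence equal to \<open>L\<close>.\<close>
lemma lang_in_infinite_part_if_left_quotient_fixed:
  assumes "wf_dfa D'" "v \<in> lists (alphabet D')" "v \<noteq> []" "left_quotient v L = L"
    and "r' \<in> states D'" "fin_equiv L (lang_from D' r')"
  obtains s' where "s' \<in> infinite_part D'" "lang_from D' s' = L"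
proof -
  define g where "g k = delta_star D' r' (concat (replicate k v))" for k
  have v_pow: "concat (replicate k v) \<in> lists (alphabet D')" for k
    using assms(2) by (induction k) auto
  have "finite (states D')"
    using assms(1) by (simp add: wf_dfa_def)
  moreover have "g ` {..card (states D')} \<subseteq> states D'"
    using delta_star_in_states[OF assms(1,5) v_pow] by (auto simp: g_def)
  ultimately obtain a b where ab: "a < b" "g a = g b"
    using pigeonhole_nat_upto_card by metis
  define u where "u = concat (replicate (b - a) v)"
  have "concat (replicate b v) = concat (replicate a v) @ u"
    using ab(1) by (simp add: u_def flip: concat_append replicate_add)
  then have cycle: "delta_star D' (g a) u = g a"
    using ab(2) by (simp add: g_def delta_star_append)
  have "u \<noteq> []"
    using ab(1) assms(3) by (simp add: u_def)
  have "g a \<in> states D'"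
    unfolding g_def by (rule delta_star_in_states[OF assms(1,5) v_pow])
  then have "g a \<in> infinite_part D'"
    using in_infinite_part_if_cycle[OF assms(1) _ _ \<open>u \<noteq> []\<close> cycle] v_pow
    by (simp add: u_def)
  moreover have "lang_from D' (g a) = L"
  proof (rule eq_if_fin_equiv_left_quotient_fixed[OF \<open>u \<noteq> []\<close>])
    show "left_quotient u (lang_from D' (g a)) = lang_from D' (g a)"
      using lang_from_delta_star[OF v_pow[of "b - a"], of "g a"] cycle by (simp add: u_def)
    show "left_quotient u L = L"
      unfolding u_def by (rule left_quotient_concat_replicate[OF assms(4)])
    have "fin_equiv (left_quotient (concat (replicate a v)) L)
        (left_quotient (concat (replicate a v)) (lang_from D' r'))"
      using assms(6) by (rule fin_equiv_left_quotient)
    then show "fin_equiv (lang_from D' (g a)) L"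
      using left_quotient_concat_replicate[OF assms(4)]
      by (simp add: g_def lang_from_delta_star[OF v_pow] fin_equiv_commute)
  qed
  ultimately show ?thesis
    using that by blast
qed

lemma lang_from_infinite_part_subset:
  assumes "wf_dfa D" "wf_dfa D'" "alphabet D = alphabet D'" "S_classes D \<subseteq> S_classes D'"
  shows "lang_from D ` infinite_part D \<subseteq> lang_from D' ` infinite_part D'"
proof
  fix L
  assume "L \<in> lang_from D ` infinite_part D"
  then obtain q where q: "q \<in> infinite_part D" "L = lang_from D q"
    by blast
  obtain r v y where r: "r \<in> states D" "v \<in> lists (alphabet D)" "v \<noteq> []"
    "delta_star D r v = r" "y \<in> lists (alphabet D)" "delta_star D r y = q"
    using infinite_part_reached_from_cycle[OF assms(1) q(1)] by blast
  obtain r' where "r' \<in> states D'" "fin_equiv (lang_from D r) (lang_from D' r')"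
    using fin_equiv_lang_from_if_S_classes_subset[OF assms(4) r(1)] by blast
  moreover have "left_quotient v (lang_from D r) = lang_from D r"
    using lang_from_delta_star[OF r(2)] r(4) by metis
  ultimately obtain s' where s': "s' \<in> infinite_part D'" "lang_from D' s' = lang_from D r"
    using lang_in_infinite_part_if_left_quotient_fixed[OF assms(2)] r(2,3) assms(3) by metis
  have "delta_star D' s' y \<in> infinite_part D'"
    using delta_star_in_infinite_part[OF assms(2) s'(1)] r(5) assms(3) by simp
  moreover have "lang_from D' (delta_star D' s' y) = left_quotient y (lang_from D r)"
    using lang_from_delta_star[of y D'] s'(2) r(5) assms(3) by simp
  then have "lang_from D' (delta_star D' s' y) = L"
    using lang_from_delta_star[OF r(5), of r] r(6) q(2) by simp
  ultimately show "L \<in> lang_from D' ` infinite_part D'"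
    by blast
qed

text \<open>Minimality makes a state determined by its language; acceptance is membership of the empty
  word and a transition is the quotient by one letter.\<close>
lemma iso_I_if_lang_from_image_eq:
  assumes "minimized D" "minimized D'" "alphabet D = alphabet D'"
    and "lang_from D ` infinite_part D = lang_from D' ` infinite_part D'"
  shows "iso_I D D'"
proof -
  have wf: "wf_dfa D" "wf_dfa D'"
    using assms(1,2) by (simp_all add: minimized_def)
  have inj: "inj_on (lang_from D) (infinite_part D)" "inj_on (lang_from D') (infinite_part D')"
    by (rule inj_on_subset[OF inj_on_lang_from infinite_part_subset_states], fact)+
  define f where "f = the_inv_into (infinite_part D') (lang_from D') \<circ> lang_from D"
  have bij: "bij_betw f (infinite_part D) (infinite_part D')"
    unfolding f_def using inj assms(4)
    by (intro bij_betw_trans bij_betw_the_inv_into) (simp_all add: bij_betw_def)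
  have f_lang: "lang_from D' (f q) = lang_from D q" if "q \<in> infinite_part D" for q
  proof -
    have "lang_from D q \<in> lang_from D' ` infinite_part D'"
      using that assms(4) by blast
    then show ?thesis
      by (simp add: f_def f_the_inv_into_f[OF inj(2)])
  qed
  have f_delta: "f (delta D q c) = delta D' (f q) c"
    if q: "q \<in> infinite_part D" and c: "c \<in> alphabet D" for q c
  proof (rule inj_onD[OF inj(2)])
    have "delta D q c \<in> infinite_part D"
      using delta_star_in_infinite_part[OF wf(1) q, of "[c]"] c by (simp add: delta_star_singleton)
    then show "f (delta D q c) \<in> infinite_part D'"
      by (rule bij_betw_apply[OF bij])
    have "f q \<in> infinite_part D'"
      using bij q by (rule bij_betw_apply)
    then show "delta D' (f q) c \<in> infinite_part D'"
      using delta_star_in_infinite_part[OF wf(2), of "f q" "[c]"] c assms(3)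
      by (simp add: delta_star_singleton)
    show "lang_from D' (f (delta D q c)) = lang_from D' (delta D' (f q) c)"
      using f_lang[OF q] f_lang[OF \<open>delta D q c \<in> infinite_part D\<close>] c assms(3)
      by (simp add: lang_from_delta)
  qed
  have f_accept: "q \<in> accept D \<longleftrightarrow> f q \<in> accept D'" if "q \<in> infinite_part D" for q
    using f_lang[OF that] Nil_in_lang_from_iff[of D q] Nil_in_lang_from_iff[of D' "f q"] by simp
  show ?thesis
    unfolding iso_I_def using bij f_accept f_delta by (intro exI[of _ f]) blast
qed

theorem mainTheorem6:
  fixes D :: "('q, 'a) dfa" and D' :: "('p, 'a) dfa"
  assumes "minimized D" and "minimized D'"
    and "alphabet D = alphabet D'"
    and "S_classes D = S_classes D'"
  shows "iso_I D D'"
proof (rule iso_I_if_lang_from_image_eq[OF assms(1-3)])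
  have wf: "wf_dfa D" "wf_dfa D'"
    using assms(1,2) by (simp_all add: minimized_def)
  show "lang_from D ` infinite_part D = lang_from D' ` infinite_part D'"
  proof (rule subset_antisym)
    show "lang_from D ` infinite_part D \<subseteq> lang_from D' ` infinite_part D'"
      using lang_from_infinite_part_subset[OF wf assms(3)] assms(4) by simp
    show "lang_from D' ` infinite_part D' \<subseteq> lang_from D ` infinite_part D"
      using lang_from_infinite_part_subset[OF wf(2,1) assms(3)[symmetric]] assms(4) by simp
  qed
qed

end
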